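(* Let $\chi$, $A_0$, $\overline{A_0}$ be as in the context with $\inf\chi=c>3/4$. Then for every $u\in\mathcal{D}(\overline{A_0})$, $$\Big(c-\frac34\Big)\Big\|\frac{u}{|x|^2}\Big\|_{L^2(\mathbb{R}^3)}\le\|\overline{A_0}u\|_{L^2(\mathbb{R}^3)}.$$
   Context: $\chi\in C([0,\infty))\cap C^1((0,\infty))$ is non-increasing and bounded; $A_0=-\Delta+\chi(|x|)/|x|^2$ with domain $C_0^\infty(\mathbb{R}^3\setminus\{0\})$; $\overline{A_0}$ is its graph closure in $L^2(\mathbb{R}^3)$: $u\in\mathcal{D}(\overline{A_0})$ iff there are $u_k\in C_0^\infty(\mathbb{R}^3\setminus\{0\})$ and $g\in L^2$ with $u_k\to u$ and $A_0u_k\to g$ in $L^2$, and then $\overline{A_0}u=g$. *)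

theory Defs
  imports "HOL-Analysis.Analysis"
begin

type_synonym R3 = "real ^ 3"

definition pdiff :: "3 \<Rightarrow> (R3 \<Rightarrow> complex) \<Rightarrow> R3 \<Rightarrow> complex" where
  "pdiff i f x = frechet_derivative f (at x) (axis i 1)"

fun iter_pdiff :: "3 list \<Rightarrow> (R3 \<Rightarrow> complex) \<Rightarrow> R3 \<Rightarrow> complex" where
  "iter_pdiff [] f = f"
| "iter_pdiff (i # is) f = pdiff i (iter_pdiff is f)"

definition smooth_R3 :: "(R3 \<Rightarrow> complex) \<Rightarrow> bool" where
  "smooth_R3 f \<longleftrightarrow> (\<forall>is x. iter_pdiff is f differentiable (at x))"

definition test_fun :: "(R3 \<Rightarrow> complex) \<Rightarrow> bool" where
  "test_fun f \<longleftrightarrow> smooth_R3 f \<and>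
     (\<exists>K. compact K \<and> 0 \<notin> K \<and> (\<forall>x. x \<notin> K \<longrightarrow> f x = 0))"

definition laplacian :: "(R3 \<Rightarrow> complex) \<Rightarrow> R3 \<Rightarrow> complex" where
  "laplacian f x = (\<Sum>i\<in>UNIV. pdiff i (pdiff i f) x)"

definition A0 :: "(real \<Rightarrow> real) \<Rightarrow> (R3 \<Rightarrow> complex) \<Rightarrow> R3 \<Rightarrow> complex" where
  "A0 chi f x = - laplacian f x + complex_of_real (chi (norm x) / (norm x)\<^sup>2) * f x"

definition memL2 :: "(R3 \<Rightarrow> complex) \<Rightarrow> bool" where
  "memL2 f \<longleftrightarrow> f \<in> borel_measurable lborel \<and> integrable lborel (\<lambda>x. (norm (f x))\<^sup>2)"

definition L2norm :: "(R3 \<Rightarrow> complex) \<Rightarrow> real" where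
  "L2norm f = sqrt (integral\<^sup>L lborel (\<lambda>x. (norm (f x))\<^sup>2))"

definition L2conv :: "(nat \<Rightarrow> R3 \<Rightarrow> complex) \<Rightarrow> (R3 \<Rightarrow> complex) \<Rightarrow> bool" where
  "L2conv fs f \<longleftrightarrow> memL2 f \<and> (\<forall>k. memL2 (fs k)) \<and>
     ((\<lambda>k. L2norm (\<lambda>x. fs k x - f x)) \<longlonglongrightarrow> 0)"

definition A0_closure_graph :: "(real \<Rightarrow> real) \<Rightarrow> (R3 \<Rightarrow> complex) \<Rightarrow> (R3 \<Rightarrow> complex) \<Rightarrow> bool" where
  "A0_closure_graph chi u g \<longleftrightarrow>
     (\<exists>us. (\<forall>k. test_fun (us k)) \<and> L2conv us u \<and> L2conv (\<lambda>k. A0 chi (us k)) g)"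

end

theory Submission
  imports Defs
begin

text \<open>For a test function \<open>f\<close> put \<open>W = f / |x|\<^sup>2\<close> and consider the vector field
  \<open>G\<^sub>i = - x\<^sub>i |f|\<^sup>2 / (2 |x|\<^sup>4) - Re (cnj f \<partial>\<^sub>i f) / |x|\<^sup>2\<close>. Computing \<open>\<partial>\<^sub>i G\<^sub>i\<close> and completing
  the square in \<open>\<partial>\<^sub>i f - x\<^sub>i f / (2 |x|\<^sup>2)\<close> gives pointwise
  \<open>Re (cnj W \<cdot> A\<^sub>0 f) \<ge> (c - 3/4) |W|\<^sup>2 + div G\<close>, where \<open>3/4 = 9/4 - 3/2\<close> collects the leftover
  terms \<open>x\<^sub>i\<^sup>2 |f|\<^sup>2 / |x|\<^sup>6\<close> and \<open>|f|\<^sup>2 / |x|\<^sup>4\<close>. As \<open>div G\<close> integrates to zero,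
  \<open>(c - 3/4) \<parallel>W\<parallel>\<^sup>2 \<le> Re \<langle>W, A\<^sub>0 f\<rangle> \<le> \<parallel>W\<parallel> \<parallel>A\<^sub>0 f\<parallel>\<close>. For \<open>u\<close> in the domain of the closure, the
  approximating test functions converge almost everywhere along a subsequence, and Fatou's lemma
  carries the estimate over.\<close>

section \<open>Integration on Euclidean space\<close>

lemma norm_le_imp_mem_cbox:
  fixes y :: "'a::euclidean_space"
  assumes "norm y \<le> r"
  shows "y \<in> cbox (- r *\<^sub>R One) (r *\<^sub>R One)"
  unfolding mem_box
proof
  fix j :: 'a assume j: "j \<in> Basis"
  have "\<bar>y \<bullet> j\<bar> \<le> norm y" using Basis_le_norm[OF j] .
  then show "(- r *\<^sub>R One) \<bullet> j \<le> y \<bullet> j \<and> y \<bullet> j \<le> (r *\<^sub>R One) \<bullet> j"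
    using assms j by auto
qed

lemma integrable_lborel_bounded_support:
  fixes h :: "'a::euclidean_space \<Rightarrow> 'b::{banach, second_countable_topology}"
  assumes cont: "continuous_on UNIV h" and supp: "\<And>x. norm x > R \<Longrightarrow> h x = 0"
  shows "integrable lborel h"
proof -
  let ?B = "cbox (- R *\<^sub>R One) (R *\<^sub>R One) :: 'a set"
  have "integrable lborel (\<lambda>x. indicator ?B x *\<^sub>R h x)"
    by (rule borel_integrable_compact) (auto intro: continuous_on_subset[OF cont])
  moreover have "(\<lambda>x. indicator ?B x *\<^sub>R h x) = h"
    using supp norm_le_imp_mem_cbox[of _ R] by (force simp: indicator_def)
  ultimately show ?thesis by simp
qed

lemma annulus_supported_continuous_integrable:
  fixes h :: "R3 \<Rightarrow> 'b::{banach, second_countable_topology}"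
  assumes cont: "continuous_on (- {0}) h" and "\<delta> > 0"
    and supp: "\<And>y. norm y < \<delta> \<or> norm y > R \<Longrightarrow> h y = 0"
  shows "continuous_on UNIV h" "integrable lborel h"
proof -
  have "continuous_on (ball 0 \<delta>) h"
    using continuous_on_cong[of "ball 0 \<delta>" "ball 0 \<delta>" h "\<lambda>_. 0"] supp by auto
  then have "continuous_on (- {0} \<union> ball 0 \<delta>) h"
    by (intro continuous_on_open_Un cont) auto
  moreover have "- {0} \<union> ball 0 \<delta> = UNIV" using \<open>\<delta> > 0\<close> by auto
  ultimately show cont_UNIV: "continuous_on UNIV h" by metis
  show "integrable lborel h"
    by (rule integrable_lborel_bounded_support[OF cont_UNIV]) (use supp in blast)
qed

lemma integral_cbox_eq_lborel:
  fixes h :: "'a::euclidean_space \<Rightarrow> real"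
  assumes cont: "continuous_on UNIV h" and supp: "\<And>x. norm x > R \<Longrightarrow> h x = 0" and "R \<le> r"
  shows "integral (cbox (- r *\<^sub>R One) (r *\<^sub>R One)) h = integral\<^sup>L lborel h"
proof -
  let ?B = "cbox (- r *\<^sub>R One) (r *\<^sub>R One) :: 'a set"
  have "(\<lambda>x. if x \<in> ?B then h x else 0) = h"
    using supp norm_le_imp_mem_cbox[of _ r] \<open>R \<le> r\<close> by force
  then have "integral ?B h = integral UNIV h"
    by (metis integral_restrict_UNIV)
  also have "\<dots> = integral\<^sup>L lborel h"
    by (rule integral_lborel[OF integrable_lborel_bounded_support[OF assms(1,2)]])
  finally show ?thesis .
qed

lemma lborel_integral_translate:
  fixes h :: "'a::euclidean_space \<Rightarrow> real"
  assumes "continuous_on UNIV h"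
  shows "integral\<^sup>L lborel (\<lambda>x. h (x + c)) = integral\<^sup>L lborel h"
proof -
  have "h \<in> borel_measurable borel" using borel_measurable_continuous_onI[OF assms] .
  then have "integral\<^sup>L (distr lborel borel ((+) c)) h = integral\<^sup>L lborel (\<lambda>x. h (c + x))"
    by (intro integral_distr) auto
  then show ?thesis by (simp add: lborel_distr_plus add.commute)
qed

lemma integral_cbox_translate_eq_lborel:
  fixes h :: "'a::euclidean_space \<Rightarrow> real"
  assumes cont: "continuous_on UNIV h" and supp: "\<And>x. norm x > R \<Longrightarrow> h x = 0"
    and "R + norm c \<le> r"
  shows "integral (cbox (- r *\<^sub>R One) (r *\<^sub>R One)) (\<lambda>y. h (y + c)) = integral\<^sup>L lborel h"
proof -
  have "h (y + c) = 0" if "norm y > R + norm c" for y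
    using supp norm_triangle_ineq4[of "y + c" c] that by simp
  then have "integral (cbox (- r *\<^sub>R One) (r *\<^sub>R One)) (\<lambda>y. h (y + c))
      = integral\<^sup>L lborel (\<lambda>y. h (y + c))"
    using assms(3)
    by (intro integral_cbox_eq_lborel[where R = "R + norm c"] continuous_on_compose2[OF cont])
       (auto intro!: continuous_intros)
  also have "\<dots> = integral\<^sup>L lborel h" by (rule lborel_integral_translate[OF cont])
  finally show ?thesis .
qed

text \<open>Integrating the fundamental theorem of calculus along the lines in direction \<open>e\<close>
  and swapping the order of integration.\<close>
lemma lborel_integral_directional_derivative_eq_0:
  fixes g D :: "'a::euclidean_space \<Rightarrow> real"
  assumes cD: "continuous_on UNIV D" and cg: "continuous_on UNIV g"
    and supp: "\<And>y. norm y > R \<Longrightarrow> D y = 0 \<and> g y = 0"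
    and der: "\<And>y. ((\<lambda>t. g (y + t *\<^sub>R e)) has_real_derivative D y) (at 0)"
  shows "integral\<^sup>L lborel D = 0"
proof -
  define r where "r = R + norm e"
  define B where "B = cbox (- r *\<^sub>R One) (r *\<^sub>R One :: 'a)"
  have shifted: "integral B (\<lambda>y. h (y + t *\<^sub>R e)) = integral\<^sup>L lborel h"
    if "h = D \<or> h = g" "t \<in> {0..1}" for h t
  proof -
    have "norm (t *\<^sub>R e) \<le> norm e" using that(2) by (auto simp: mult_left_le_one_le)
    then show ?thesis
      using that(1) cD cg supp unfolding B_def r_def
      by (intro integral_cbox_translate_eq_lborel[where R = R]) auto
  qed
  have der_at: "((\<lambda>s. g (y + s *\<^sub>R e)) has_real_derivative D (y + t *\<^sub>R e)) (at t)" for y t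
  proof -
    have "((\<lambda>s. g (y + (s + t) *\<^sub>R e)) has_real_derivative D (y + t *\<^sub>R e)) (at 0)"
      using der[of "y + t *\<^sub>R e"] by (simp add: algebra_simps)
    then show ?thesis using DERIV_shift[of "\<lambda>s. g (y + s *\<^sub>R e)" _ 0 t] by simp
  qed
  have ftc: "integral {0..1} (\<lambda>t. D (y + t *\<^sub>R e)) = g (y + e) - g y" for y
  proof -
    have "((\<lambda>t. D (y + t *\<^sub>R e)) has_integral (g (y + 1 *\<^sub>R e) - g (y + 0 *\<^sub>R e))) {0..1}"
      by (rule fundamental_theorem_of_calculus)
         (auto intro!: DERIV_subset[OF der_at]
               simp: has_real_derivative_iff_has_vector_derivative[symmetric])
    then show ?thesis by (simp add: integral_unique)
  qed
  have cD_line: "continuous_on UNIV (\<lambda>(y, t). D (y + t *\<^sub>R e))"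
    unfolding case_prod_unfold
    by (rule continuous_on_compose2[OF cD]) (auto intro!: continuous_intros)
  have "integral (cbox 0 1) (\<lambda>t::real. integral B (\<lambda>y. D (y + t *\<^sub>R e)))
      = integral (cbox 0 1) (\<lambda>t::real. integral\<^sup>L lborel D)"
    using shifted by (intro Henstock_Kurzweil_Integration.integral_cong) auto
  then have "integral\<^sup>L lborel D = integral (cbox 0 1) (\<lambda>t::real. integral B (\<lambda>y. D (y + t *\<^sub>R e)))"
    by simp
  also have "\<dots> = integral B (\<lambda>y. integral (cbox 0 1) (\<lambda>t. D (y + t *\<^sub>R e)))"
    unfolding B_def
    by (rule integral_swap_continuous[symmetric]) (rule continuous_on_subset[OF cD_line], auto)
  also have "\<dots> = integral B (\<lambda>y. g (y + 1 *\<^sub>R e)) - integral B (\<lambda>y. g (y + 0 *\<^sub>R e))"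
    using ftc unfolding B_def
    by (simp, intro Henstock_Kurzweil_Integration.integral_diff integrable_continuous
        continuous_on_compose2[OF cg]) (auto intro!: continuous_intros)
  also have "\<dots> = 0" using shifted[of g 1] shifted[of g 0] by simp
  finally show ?thesis .
qed

lemma power2_add_le_weighted:
  fixes a b e :: real
  assumes "e > 0"
  shows "(a + b)\<^sup>2 \<le> (1 + e) * a\<^sup>2 + (1 + 1/e) * b\<^sup>2"
proof -
  have "0 \<le> (e * a - b)\<^sup>2 / e" using assms by simp
  then show ?thesis using assms by (simp add: field_simps power2_eq_square)
qed

lemma norm_power2_le_weighted:
  fixes a b :: "'a::real_normed_vector" and e :: real
  assumes "e > 0"
  shows "(norm a)\<^sup>2 \<le> (1 + e) * (norm b)\<^sup>2 + (1 + 1/e) * (norm (a - b))\<^sup>2"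
proof -
  have "norm a \<le> norm b + norm (a - b)" using norm_triangle_ineq[of b "a - b"] by simp
  then have "(norm a)\<^sup>2 \<le> (norm b + norm (a - b))\<^sup>2" by (simp add: power_mono)
  also have "\<dots> \<le> (1 + e) * (norm b)\<^sup>2 + (1 + 1/e) * (norm (a - b))\<^sup>2"
    by (rule power2_add_le_weighted[OF assms])
  finally show ?thesis .
qed

lemma integral_sq_le_of_Re_cnj_lower_bound:
  fixes W V :: "'a \<Rightarrow> complex"
  assumes d: "d > 0"
    and iW: "integrable M (\<lambda>x. (norm (W x))\<^sup>2)" and iV: "integrable M (\<lambda>x. (norm (V x))\<^sup>2)"
    and iWV: "integrable M (\<lambda>x. Re (cnj (W x) * V x))"
    and lower: "d * (\<integral>x. (norm (W x))\<^sup>2 \<partial>M) \<le> (\<integral>x. Re (cnj (W x) * V x) \<partial>M)"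
  shows "d\<^sup>2 * (\<integral>x. (norm (W x))\<^sup>2 \<partial>M) \<le> (\<integral>x. (norm (V x))\<^sup>2 \<partial>M)"
proof -
  have pointwise: "Re (cnj (W x) * V x) \<le> d/2 * (norm (W x))\<^sup>2 + 1/(2*d) * (norm (V x))\<^sup>2" for x
  proof -
    have "Re (cnj (W x) * V x) \<le> norm (W x) * norm (V x)"
      using complex_Re_le_cmod[of "cnj (W x) * V x"] by (simp add: norm_mult)
    also have "\<dots> \<le> d/2 * (norm (W x))\<^sup>2 + 1/(2*d) * (norm (V x))\<^sup>2"
    proof -
      have "0 \<le> (d * norm (W x) - norm (V x))\<^sup>2 / (2 * d)" using d by simp
      then show ?thesis using d by (simp add: field_simps power2_eq_square)
    qed
    finally show ?thesis .
  qed
  then have "(\<integral>x. Re (cnj (W x) * V x) \<partial>M)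
      \<le> d/2 * (\<integral>x. (norm (W x))\<^sup>2 \<partial>M) + 1/(2*d) * (\<integral>x. (norm (V x))\<^sup>2 \<partial>M)"
  proof -
    have "(\<integral>x. Re (cnj (W x) * V x) \<partial>M)
        \<le> (\<integral>x. d/2 * (norm (W x))\<^sup>2 + 1/(2*d) * (norm (V x))\<^sup>2 \<partial>M)"
      using iW iV iWV pointwise by (intro integral_mono) auto
    also have "\<dots> = d/2 * (\<integral>x. (norm (W x))\<^sup>2 \<partial>M) + 1/(2*d) * (\<integral>x. (norm (V x))\<^sup>2 \<partial>M)"
      using iW iV by simp
    finally show ?thesis .
  qed
  then have "d/2 * (\<integral>x. (norm (W x))\<^sup>2 \<partial>M) \<le> 1/(2*d) * (\<integral>x. (norm (V x))\<^sup>2 \<partial>M)"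
    using lower by linarith
  then have "2*d * (d/2 * (\<integral>x. (norm (W x))\<^sup>2 \<partial>M)) \<le> 2*d * (1/(2*d) * (\<integral>x. (norm (V x))\<^sup>2 \<partial>M))"
    using d by (intro mult_left_mono) auto
  then show ?thesis using d by (simp add: power2_eq_square)
qed

lemma nn_integral_le_of_AE_tendsto:
  fixes h :: "nat \<Rightarrow> 'a \<Rightarrow> real"
  assumes "\<And>n. integrable M (h n)" "\<And>n x. 0 \<le> h n x"
    and "AE x in M. (\<lambda>n. h n x) \<longlonglongrightarrow> H x"
    and "\<forall>\<^sub>F n in sequentially. integral\<^sup>L M (h n) \<le> B"
  shows "(\<integral>\<^sup>+ x. ennreal (H x) \<partial>M) \<le> ennreal B"
proof -
  have "(\<integral>\<^sup>+ x. ennreal (H x) \<partial>M) = (\<integral>\<^sup>+ x. liminf (\<lambda>n. ennreal (h n x)) \<partial>M)"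
    using assms(3) by (intro nn_integral_cong_AE)
      (auto elim!: AE_mp intro!: lim_imp_Liminf[symmetric] tendsto_ennrealI)
  also have "\<dots> \<le> liminf (\<lambda>n. \<integral>\<^sup>+ x. ennreal (h n x) \<partial>M)"
    using assms(1) by (intro nn_integral_liminf) auto
  also have "\<dots> = liminf (\<lambda>n. ennreal (integral\<^sup>L M (h n)))"
    using assms(1,2) by (simp add: nn_integral_eq_integral)
  also have "\<dots> \<le> ennreal B"
    using assms(4) by (intro Liminf_le) (auto elim!: eventually_mono intro: ennreal_leI)
  finally show ?thesis .
qed

lemma integrable_bound_of_nn_integral_le:
  fixes H :: "'a \<Rightarrow> real"
  assumes H: "H \<in> borel_measurable M" "\<And>x. 0 \<le> H x" and "C > 0" "G \<ge> 0"
    and bound: "\<And>e. e > 0 \<Longrightarrow> (\<integral>\<^sup>+ x. ennreal (H x) \<partial>M) \<le> ennreal ((G + e) / C)"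
  shows "integrable M H \<and> C * integral\<^sup>L M H \<le> G"
proof
  show iH: "integrable M H"
    using bound[of 1] le_less_trans[OF _ ennreal_less_top] H by (intro integrableI_nonneg) auto
  have "C * integral\<^sup>L M H \<le> G + e" if "e > 0" for e
  proof -
    have "(\<integral>\<^sup>+ x. ennreal (H x) \<partial>M) = ennreal (integral\<^sup>L M H)"
      using iH H(2) by (intro nn_integral_eq_integral) auto
    with bound[OF that] have "ennreal (integral\<^sup>L M H) \<le> ennreal ((G + e) / C)" by simp
    then have "integral\<^sup>L M H \<le> (G + e) / C"
      using \<open>C > 0\<close> \<open>G \<ge> 0\<close> that by (subst (asm) ennreal_le_iff) auto
    then show ?thesis using \<open>C > 0\<close> by (simp add: field_simps)
  qed
  then show "C * integral\<^sup>L M H \<le> G" by (rule field_le_epsilon)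
qed

section \<open>Test functions\<close>

lemma test_fun_differentiable:
  assumes "test_fun f"
  shows "f differentiable (at x)" "pdiff i f differentiable (at x)"
    "pdiff i (pdiff i f) differentiable (at x)"
  using assms unfolding test_fun_def smooth_R3_def
  by (metis iter_pdiff.simps)+

lemma test_fun_continuous:
  assumes "test_fun f"
  shows "continuous_on UNIV f" "continuous_on UNIV (pdiff i f)"
    "continuous_on UNIV (pdiff i (pdiff i f))"
  by (intro continuous_at_imp_continuous_on ballI differentiable_imp_continuous_within
      test_fun_differentiable[OF assms])+

lemma pdiff_eq_0_if_vanishing_on_open:
  assumes "open U" "x \<in> U" "\<And>y. y \<in> U \<Longrightarrow> h y = 0"
  shows "pdiff i h x = 0"
proof -
  have "(h has_derivative (\<lambda>_. 0)) (at x)"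
    by (rule has_derivative_transform_within_open[of "\<lambda>_. 0"]) (use assms in auto)
  then show ?thesis unfolding pdiff_def using frechet_derivative_at by metis
qed

lemma test_fun_vanishes_near_0_and_infinity:
  assumes "test_fun f"
  obtains \<delta> R where "\<delta> > 0"
    "\<And>y i. norm y < \<delta> \<or> norm y > R \<Longrightarrow> f y = 0 \<and> pdiff i f y = 0 \<and> pdiff i (pdiff i f) y = 0"
proof -
  obtain K where K: "compact K" "0 \<notin> K" "\<And>x. x \<notin> K \<Longrightarrow> f x = 0"
    using assms unfolding test_fun_def by blast
  have "open (- K)" using K(1) by (simp add: compact_imp_closed open_Compl)
  then obtain \<delta> where \<delta>: "\<delta> > 0" "ball 0 \<delta> \<subseteq> - K" using K(2) open_contains_ball by blast
  obtain R where R: "\<And>x. x \<in> K \<Longrightarrow> norm x \<le> R"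
    using compact_imp_bounded[OF K(1)] bounded_iff by blast
  have "f y = 0 \<and> pdiff i f y = 0 \<and> pdiff i (pdiff i f) y = 0" if "y \<in> - K" for y i
    using pdiff_eq_0_if_vanishing_on_open[OF \<open>open (- K)\<close>] K(3) that by auto
  moreover have "y \<in> - K" if "norm y < \<delta> \<or> norm y > R" for y
    using that \<delta>(2) R by force
  ultimately show ?thesis using that \<delta>(1) by blast
qed

lemma pdiff_line_derivative:
  fixes h :: "R3 \<Rightarrow> complex"
  assumes "h differentiable (at x)"
  shows "((\<lambda>t. Re (h (x + t *\<^sub>R axis i 1))) has_real_derivative Re (pdiff i h x)) (at 0)"
    "((\<lambda>t. Im (h (x + t *\<^sub>R axis i 1))) has_real_derivative Im (pdiff i h x)) (at 0)"
proof -
  let ?h' = "frechet_derivative h (at x)"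
  have hd: "(h has_derivative ?h') (at ((\<lambda>t::real. x + t *\<^sub>R axis i 1) 0))"
    using assms frechet_derivative_works by auto
  have "((\<lambda>t::real. x + t *\<^sub>R axis i 1) has_derivative (\<lambda>t. t *\<^sub>R axis i 1)) (at 0)"
    by (auto intro!: derivative_eq_intros)
  from has_derivative_compose[OF this hd]
  have "((\<lambda>t. h (x + t *\<^sub>R axis i 1)) has_vector_derivative pdiff i h x) (at 0)"
    using linear_scale[OF has_derivative_linear[OF hd]]
    by (simp add: has_vector_derivative_def pdiff_def o_def)
  from has_derivative_Re[OF this[unfolded has_vector_derivative_def]]
    has_derivative_Im[OF this[unfolded has_vector_derivative_def]]
  show "((\<lambda>t. Re (h (x + t *\<^sub>R axis i 1))) has_real_derivative Re (pdiff i h x)) (at 0)"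
    "((\<lambda>t. Im (h (x + t *\<^sub>R axis i 1))) has_real_derivative Im (pdiff i h x)) (at 0)"
    by (simp_all add: has_field_derivative_def mult.commute[of _ "Re (pdiff i h x)"]
        mult.commute[of _ "Im (pdiff i h x)"])
qed

section \<open>The Rellich vector field\<close>

definition sqmod :: "(R3 \<Rightarrow> complex) \<Rightarrow> R3 \<Rightarrow> real" where
  "sqmod f x = (Re (f x))\<^sup>2 + (Im (f x))\<^sup>2"

definition half_pdiff_sqmod :: "(R3 \<Rightarrow> complex) \<Rightarrow> 3 \<Rightarrow> R3 \<Rightarrow> real" where
  "half_pdiff_sqmod f i x = Re (f x) * Re (pdiff i f x) + Im (f x) * Im (pdiff i f x)"

definition rellich_field :: "(R3 \<Rightarrow> complex) \<Rightarrow> 3 \<Rightarrow> R3 \<Rightarrow> real" where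
  "rellich_field f i x =
     - (1/2) * x$i * sqmod f x / ((norm x)\<^sup>2)\<^sup>2 - half_pdiff_sqmod f i x / (norm x)\<^sup>2"

definition rellich_field_pdiff :: "(R3 \<Rightarrow> complex) \<Rightarrow> 3 \<Rightarrow> R3 \<Rightarrow> real" where
  "rellich_field_pdiff f i x =
     - (1/2) * sqmod f x / ((norm x)\<^sup>2)\<^sup>2 + x$i * half_pdiff_sqmod f i x / ((norm x)\<^sup>2)\<^sup>2
     + 2 * (x$i)\<^sup>2 * sqmod f x / ((norm x)\<^sup>2)^3
     - ((Re (pdiff i f x))\<^sup>2 + (Im (pdiff i f x))\<^sup>2) / (norm x)\<^sup>2
     - (Re (f x) * Re (pdiff i (pdiff i f) x) + Im (f x) * Im (pdiff i (pdiff i f) x)) / (norm x)\<^sup>2"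

lemma norm_add_axis_sq: "(norm (x + t *\<^sub>R axis i 1))\<^sup>2 = (norm x)\<^sup>2 + 2 * t * x$i + t\<^sup>2"
  unfolding power2_norm_eq_inner
  by (simp add: inner_add_left inner_add_right inner_axis inner_axis' power2_eq_square algebra_simps)

lemma rellich_field_has_derivative:
  assumes "x \<noteq> 0" and f: "f differentiable (at x)" and df: "pdiff i f differentiable (at x)"
  shows "((\<lambda>t. rellich_field f i (x + t *\<^sub>R axis i 1)) has_real_derivative rellich_field_pdiff f i x) (at 0)"
proof -
  define A where "A t = Re (f (x + t *\<^sub>R axis i 1))" for t
  define B where "B t = Im (f (x + t *\<^sub>R axis i 1))" for t
  define C where "C t = Re (pdiff i f (x + t *\<^sub>R axis i 1))" for t
  define E where "E t = Im (pdiff i f (x + t *\<^sub>R axis i 1))" for t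
  define n where "n = (norm x)\<^sup>2"
  have n: "n > 0" using assms(1) unfolding n_def by simp
  have der: "(A has_real_derivative Re (pdiff i f x)) (at 0)"
    "(B has_real_derivative Im (pdiff i f x)) (at 0)"
    "(C has_real_derivative Re (pdiff i (pdiff i f) x)) (at 0)"
    "(E has_real_derivative Im (pdiff i (pdiff i f) x)) (at 0)"
    unfolding A_def B_def C_def E_def using pdiff_line_derivative[OF f] pdiff_line_derivative[OF df]
    by blast+
  have line: "(\<lambda>t. rellich_field f i (x + t *\<^sub>R axis i 1)) =
    (\<lambda>t. - (1/2) * (x$i + t) * ((A t)\<^sup>2 + (B t)\<^sup>2) / (n + 2 * t * (x$i) + t\<^sup>2)\<^sup>2
         - (A t * C t + B t * E t) / (n + 2 * t * (x$i) + t\<^sup>2))"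
    unfolding rellich_field_def sqmod_def half_pdiff_sqmod_def norm_add_axis_sq
    by (simp add: n_def A_def B_def C_def E_def)
  have at0: "A 0 = Re (f x)" "B 0 = Im (f x)" "C 0 = Re (pdiff i f x)" "E 0 = Im (pdiff i f x)"
    by (simp_all add: A_def B_def C_def E_def)
  have nz: "n + 2 * 0 * x $ i + 0\<^sup>2 \<noteq> 0" "(n + 2 * 0 * x $ i + 0\<^sup>2)\<^sup>2 \<noteq> 0"
    using n by simp_all
  show ?thesis
    unfolding line rellich_field_pdiff_def sqmod_def half_pdiff_sqmod_def n_def[symmetric]
    apply (rule derivative_eq_intros der refl nz)+
    using n by (simp_all add: at0) (simp add: field_simps, algebra)
qed

lemma rellich_field_pdiff_complete_square:
  assumes "x \<noteq> 0"
  shows "rellich_field_pdiff f i x =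
    - (1/2) * sqmod f x / ((norm x)\<^sup>2)\<^sup>2 + (9/4) * (x$i)\<^sup>2 * sqmod f x / ((norm x)\<^sup>2)^3
    - (Re (f x) * Re (pdiff i (pdiff i f) x) + Im (f x) * Im (pdiff i (pdiff i f) x)) / (norm x)\<^sup>2
    - sqmod (\<lambda>y. pdiff i f y - complex_of_real (y$i / (2 * (norm y)\<^sup>2)) * f y) x / (norm x)\<^sup>2"
proof -
  define n where "n = (norm x)\<^sup>2"
  have "n \<noteq> 0" using assms unfolding n_def by simp
  then show ?thesis
    unfolding rellich_field_pdiff_def sqmod_def half_pdiff_sqmod_def n_def[symmetric]
    by (simp add: n_def[symmetric] field_simps) algebra
qed

lemma norm_sq_vec_eq_sum: "(norm (x :: real ^ 'n))\<^sup>2 = (\<Sum>i\<in>UNIV. (x$i)\<^sup>2)"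
  by (simp add: norm_vec_def L2_set_def sum_nonneg)

lemma rellich_pointwise_lower_bound:
  assumes "c \<le> chi (norm x)"
  shows "(c - 3/4) * sqmod f x / ((norm x)\<^sup>2)\<^sup>2 + (\<Sum>i\<in>UNIV. rellich_field_pdiff f i x)
    \<le> Re (cnj (f x / complex_of_real ((norm x)\<^sup>2)) * A0 chi f x)"
proof (cases "x = 0")
  case True
  then show ?thesis by (simp add: rellich_field_pdiff_def)
next
  case False
  define n where "n = (norm x)\<^sup>2"
  define F where "F = sqmod f x"
  define Q where "Q i = Re (f x) * Re (pdiff i (pdiff i f) x) + Im (f x) * Im (pdiff i (pdiff i f) x)" for i
  have n: "n > 0" using False unfolding n_def by simp
  have F: "F \<ge> 0" unfolding F_def sqmod_def by simp
  have "rellich_field_pdiff f i x \<le> - (1/2) * F / n\<^sup>2 + (9/4) * (x$i)\<^sup>2 * F / n^3 - Q i / n" for i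
    using rellich_field_pdiff_complete_square[OF False, of f i] n
    unfolding n_def F_def Q_def by (simp add: sqmod_def)
  then have "(\<Sum>i\<in>UNIV. rellich_field_pdiff f i x)
      \<le> (\<Sum>i\<in>UNIV. - (1/2) * F / n\<^sup>2 + (9/4) * F / n^3 * (x$i)\<^sup>2 - Q i / n)"
    by (intro sum_mono) (simp add: field_simps)
  also have "\<dots> = - (3/2) * F / n\<^sup>2 + (9/4) * F / n^3 * (\<Sum>i\<in>UNIV. (x$i)\<^sup>2) - (\<Sum>i\<in>UNIV. Q i) / n"
    by (simp add: sum_subtractf sum.distrib sum_distrib_left sum_divide_distrib)
  also have "\<dots> = (3/4) * F / n\<^sup>2 - (\<Sum>i\<in>UNIV. Q i) / n"
    using n unfolding norm_sq_vec_eq_sum[symmetric] n_def[symmetric]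
    by (simp add: field_simps power2_eq_square power3_eq_cube)
  finally have div_bound: "(\<Sum>i\<in>UNIV. rellich_field_pdiff f i x) \<le> (3/4) * F / n\<^sup>2 - (\<Sum>i\<in>UNIV. Q i) / n" .
  have "Re (cnj (f x) * (\<Sum>i\<in>UNIV. pdiff i (pdiff i f) x)) = (\<Sum>i\<in>UNIV. Q i)"
    by (simp add: Q_def sum_distrib_left Re_sum)
  moreover have "Re (cnj (f x / complex_of_real n) * A0 chi f x)
      = (chi (norm x) / n * F - Re (cnj (f x) * (\<Sum>i\<in>UNIV. pdiff i (pdiff i f) x))) / n"
    unfolding A0_def laplacian_def n_def[symmetric] F_def sqmod_def
    using n by (simp add: Re_divide Im_divide field_simps power2_eq_square)
  ultimately have "Re (cnj (f x / complex_of_real n) * A0 chi f x)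
      = chi (norm x) * F / n\<^sup>2 - (\<Sum>i\<in>UNIV. Q i) / n"
    using n by (simp add: field_simps power2_eq_square)
  moreover have "c * F / n\<^sup>2 \<le> chi (norm x) * F / n\<^sup>2"
    using assms F n by (simp add: divide_right_mono mult_right_mono)
  moreover have "(c - 3/4) * F / n\<^sup>2 = c * F / n\<^sup>2 - (3/4) * F / n\<^sup>2"
    by (simp add: diff_divide_distrib left_diff_distrib)
  ultimately show ?thesis
    using div_bound unfolding n_def[symmetric] F_def[symmetric] by linarith
qed

section \<open>The inequality for test functions\<close>

lemma test_fun_rellich_field_support:
  assumes "test_fun f"
  obtains \<delta> R where "\<delta> > 0"
    "\<And>y i. norm y < \<delta> \<or> norm y > R \<Longrightarrow> rellich_field f i y = 0 \<and> rellich_field_pdiff f i y = 0"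
proof -
  obtain \<delta> R where "\<delta> > 0" and vanish:
    "\<And>y i. norm y < \<delta> \<or> norm y > R \<Longrightarrow> f y = 0 \<and> pdiff i f y = 0 \<and> pdiff i (pdiff i f) y = 0"
    using test_fun_vanishes_near_0_and_infinity[OF assms] by blast
  have "rellich_field f i y = 0 \<and> rellich_field_pdiff f i y = 0"
    if "norm y < \<delta> \<or> norm y > R" for y i
  proof -
    have "f y = 0" "pdiff i f y = 0" "pdiff i (pdiff i f) y = 0" using vanish[OF that] by blast+
    then show ?thesis
      unfolding rellich_field_def rellich_field_pdiff_def sqmod_def half_pdiff_sqmod_def by simp
  qed
  with \<open>\<delta> > 0\<close> that show ?thesis by blast
qed

lemma test_fun_rellich_field_line_derivative:
  assumes "test_fun f"
  shows "((\<lambda>t. rellich_field f i (y + t *\<^sub>R axis i 1)) has_real_derivative rellich_field_pdiff f i y) (at 0)"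
proof (cases "y = 0")
  case False
  then show ?thesis by (intro rellich_field_has_derivative test_fun_differentiable[OF assms])
next
  case True
  obtain \<delta> R where \<delta>: "\<delta> > 0" and vanish:
    "\<And>y. norm y < \<delta> \<or> norm y > R \<Longrightarrow> rellich_field f i y = 0 \<and> rellich_field_pdiff f i y = 0"
    using test_fun_rellich_field_support[OF assms] by metis
  have near_0: "0 = rellich_field f i (y + t *\<^sub>R axis i 1)" if "t \<in> ball 0 \<delta>" for t
  proof -
    have "norm (y + t *\<^sub>R axis i 1) < \<delta>" using that True by simp
    then show ?thesis using vanish by (metis (no_types))
  qed
  have "((\<lambda>_. 0) has_real_derivative 0) (at 0)" by simp
  then have "((\<lambda>t. rellich_field f i (y + t *\<^sub>R axis i 1)) has_real_derivative 0) (at 0)"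
    by (rule has_field_derivative_transform_within_open[where S = "ball 0 \<delta>"])
      (use \<delta> near_0 in auto)
  moreover have "rellich_field_pdiff f i y = 0" using vanish True \<delta> by simp
  ultimately show ?thesis by simp
qed

lemma test_fun_integral_rellich_field_pdiff:
  assumes "test_fun f"
  shows "integrable lborel (rellich_field_pdiff f i)" "integral\<^sup>L lborel (rellich_field_pdiff f i) = 0"
proof -
  obtain \<delta> R where \<delta>: "\<delta> > 0" and vanish:
    "\<And>y. norm y < \<delta> \<or> norm y > R \<Longrightarrow> rellich_field f i y = 0 \<and> rellich_field_pdiff f i y = 0"
    using test_fun_rellich_field_support[OF assms] by metis
  note cont = test_fun_continuous[OF assms]
  have "continuous_on (- {0}) (rellich_field_pdiff f i)"
    unfolding rellich_field_pdiff_def sqmod_def half_pdiff_sqmod_def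
    by (intro continuous_intros continuous_on_subset[OF cont(1)] continuous_on_subset[OF cont(2)]
        continuous_on_subset[OF cont(3)]) auto
  from annulus_supported_continuous_integrable[OF this \<delta>] vanish
  have cD: "continuous_on UNIV (rellich_field_pdiff f i)"
    and iD: "integrable lborel (rellich_field_pdiff f i)"
    by blast+
  have "continuous_on (- {0}) (rellich_field f i)"
    unfolding rellich_field_def sqmod_def half_pdiff_sqmod_def
    by (intro continuous_intros continuous_on_subset[OF cont(1)] continuous_on_subset[OF cont(2)])
      auto
  from annulus_supported_continuous_integrable(1)[OF this \<delta>] vanish
  have cG: "continuous_on UNIV (rellich_field f i)" by blast
  show "integrable lborel (rellich_field_pdiff f i)" by (fact iD)
  show "integral\<^sup>L lborel (rellich_field_pdiff f i) = 0"
    by (rule lborel_integral_directional_derivative_eq_0[OF cD cG _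
        test_fun_rellich_field_line_derivative[OF assms]]) (use vanish in blast)
qed

lemma test_fun_A0_integrable:
  fixes f :: "R3 \<Rightarrow> complex" and chi :: "real \<Rightarrow> real"
  defines "W \<equiv> \<lambda>x. f x / complex_of_real ((norm x)\<^sup>2)"
  assumes tf: "test_fun f" and cchi: "continuous_on {0..} chi"
  shows "integrable lborel (\<lambda>x. (norm (W x))\<^sup>2)" "integrable lborel (\<lambda>x. (norm (A0 chi f x))\<^sup>2)"
    "integrable lborel (\<lambda>x. Re (cnj (W x) * A0 chi f x))"
proof -
  obtain \<delta> R where \<delta>: "\<delta> > 0" and vanish:
    "\<And>y i. norm y < \<delta> \<or> norm y > R \<Longrightarrow> f y = 0 \<and> pdiff i f y = 0 \<and> pdiff i (pdiff i f) y = 0"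
    using test_fun_vanishes_near_0_and_infinity[OF tf] by blast
  have W_A0_vanish: "W y = 0 \<and> A0 chi f y = 0" if "norm y < \<delta> \<or> norm y > R" for y
  proof -
    have "f y = 0" "\<And>i. pdiff i (pdiff i f) y = 0" using vanish[OF that] by blast+
    then show ?thesis unfolding W_def A0_def laplacian_def by simp
  qed
  note cont = test_fun_continuous[OF tf]
  have cW: "continuous_on (- {0}) W"
    unfolding W_def by (intro continuous_intros continuous_on_subset[OF cont(1)]) auto
  have "continuous_on (- {0}) (\<lambda>x::R3. chi (norm x))"
    by (rule continuous_on_compose2[OF cchi]) (auto intro!: continuous_intros)
  then have cA: "continuous_on (- {0}) (A0 chi f)"
    unfolding A0_def laplacian_def
    by (intro continuous_intros continuous_on_subset[OF cont(1)] continuous_on_subset[OF cont(3)])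
      auto
  show "integrable lborel (\<lambda>x. (norm (W x))\<^sup>2)" "integrable lborel (\<lambda>x. (norm (A0 chi f x))\<^sup>2)"
    "integrable lborel (\<lambda>x. Re (cnj (W x) * A0 chi f x))"
    by (rule annulus_supported_continuous_integrable(2)[OF _ \<delta>, of _ R];
        use W_A0_vanish in \<open>auto intro!: continuous_intros cW cA\<close>)+
qed

lemma test_fun_rellich_inequality:
  fixes f :: "R3 \<Rightarrow> complex" and chi :: "real \<Rightarrow> real"
  assumes tf: "test_fun f" and cchi: "continuous_on {0..} chi"
    and lb: "\<And>x::R3. c \<le> chi (norm x)" and c: "c > 3/4"
  shows "integrable lborel (\<lambda>x. (norm (f x / complex_of_real ((norm x)\<^sup>2)))\<^sup>2) \<and>
    (c - 3/4)\<^sup>2 * (\<integral>x. (norm (f x / complex_of_real ((norm x)\<^sup>2)))\<^sup>2 \<partial>lborel)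
      \<le> (\<integral>x. (norm (A0 chi f x))\<^sup>2 \<partial>lborel)"
proof -
  define W where "W x = f x / complex_of_real ((norm x)\<^sup>2)" for x
  note integrable = test_fun_A0_integrable[OF tf cchi, folded W_def]
  have "(\<integral>x. (c - 3/4) * (norm (W x))\<^sup>2 + (\<Sum>i\<in>UNIV. rellich_field_pdiff f i x) \<partial>lborel)
      \<le> (\<integral>x. Re (cnj (W x) * A0 chi f x) \<partial>lborel)"
  proof (rule integral_mono)
    show "integrable lborel (\<lambda>x. (c - 3/4) * (norm (W x))\<^sup>2 + (\<Sum>i\<in>UNIV. rellich_field_pdiff f i x))"
      using integrable test_fun_integral_rellich_field_pdiff(1)[OF tf] by auto
    show "(c - 3/4) * (norm (W x))\<^sup>2 + (\<Sum>i\<in>UNIV. rellich_field_pdiff f i x) \<le> Re (cnj (W x) * A0 chi f x)"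
      for x
      using rellich_pointwise_lower_bound[of c chi x f, OF lb]
      by (simp add: W_def sqmod_def norm_divide power_divide cmod_power2)
  qed (rule integrable(3))
  also have "(\<integral>x. (c - 3/4) * (norm (W x))\<^sup>2 + (\<Sum>i\<in>UNIV. rellich_field_pdiff f i x) \<partial>lborel)
      = (c - 3/4) * (\<integral>x. (norm (W x))\<^sup>2 \<partial>lborel)"
    using integrable test_fun_integral_rellich_field_pdiff[OF tf] by (simp add: integral_sum)
  finally have "(c - 3/4)\<^sup>2 * (\<integral>x. (norm (W x))\<^sup>2 \<partial>lborel) \<le> (\<integral>x. (norm (A0 chi f x))\<^sup>2 \<partial>lborel)"
    using c integrable by (intro integral_sq_le_of_Re_cnj_lower_bound) auto
  with integrable(1) show ?thesis unfolding W_def by blast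
qed

section \<open>Passage to the closure\<close>

lemma memL2_integrable_sq_diff:
  assumes "memL2 f" "memL2 g"
  shows "integrable lborel (\<lambda>x. (norm (f x - g x))\<^sup>2)"
proof (rule Bochner_Integration.integrable_bound)
  show "integrable lborel (\<lambda>x. 2 * (norm (f x))\<^sup>2 + 2 * (norm (g x))\<^sup>2)"
    using assms unfolding memL2_def by simp
  have "f \<in> borel_measurable lborel" "g \<in> borel_measurable lborel"
    using assms unfolding memL2_def by auto
  then show "(\<lambda>x. (norm (f x - g x))\<^sup>2) \<in> borel_measurable lborel" by measurable
  show "AE x in lborel. norm ((norm (f x - g x))\<^sup>2) \<le> norm (2 * (norm (f x))\<^sup>2 + 2 * (norm (g x))\<^sup>2)"
    using norm_power2_le_weighted[of 1 "f x - g x" "f x" for x] by simp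
qed

lemma L2conv_integral_sq_diff_tendsto_0:
  assumes "L2conv fs f"
  shows "(\<lambda>k. \<integral>x. (norm (fs k x - f x))\<^sup>2 \<partial>lborel) \<longlonglongrightarrow> 0"
proof -
  have "(\<lambda>k. (L2norm (\<lambda>x. fs k x - f x))\<^sup>2) \<longlonglongrightarrow> 0\<^sup>2"
    using assms unfolding L2conv_def by (intro tendsto_intros) auto
  moreover have "(L2norm (\<lambda>x. fs k x - f x))\<^sup>2 = (\<integral>x. (norm (fs k x - f x))\<^sup>2 \<partial>lborel)" for k
    unfolding L2norm_def by (simp add: integral_nonneg_AE)
  ultimately show ?thesis by simp
qed

lemma L2conv_AE_subseq:
  assumes "L2conv fs f"
  obtains r where "strict_mono r" "AE x in lborel. (\<lambda>n. fs (r n) x) \<longlonglongrightarrow> f x"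
proof -
  have "\<exists>r. strict_mono r \<and> (AE x in lborel. (\<lambda>n. (norm (fs (r n) x - f x))\<^sup>2) \<longlonglongrightarrow> 0)"
    using assms memL2_integrable_sq_diff L2conv_integral_sq_diff_tendsto_0[OF assms]
    unfolding L2conv_def by (intro tendsto_L1_AE_subseq) auto
  then obtain r where r: "strict_mono r"
    and ae: "AE x in lborel. (\<lambda>n. (norm (fs (r n) x - f x))\<^sup>2) \<longlonglongrightarrow> 0"
    by blast
  have "(\<lambda>n. fs (r n) x) \<longlonglongrightarrow> f x" if "(\<lambda>n. (norm (fs (r n) x - f x))\<^sup>2) \<longlonglongrightarrow> 0" for x
  proof -
    have "(\<lambda>n. sqrt ((norm (fs (r n) x - f x))\<^sup>2)) \<longlonglongrightarrow> sqrt 0"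
      using that by (intro tendsto_intros)
    then have "(\<lambda>n. fs (r n) x - f x) \<longlonglongrightarrow> 0" by (simp add: tendsto_norm_zero_iff)
    then show ?thesis by (rule LIM_zero_cancel)
  qed
  with ae have "AE x in lborel. (\<lambda>n. fs (r n) x) \<longlonglongrightarrow> f x" by (auto elim!: AE_mp)
  with r that show ?thesis by blast
qed

lemma L2conv_eventually_integral_sq_le:
  assumes "L2conv gs g" "e > 0"
  shows "\<forall>\<^sub>F k in sequentially. (\<integral>x. (norm (gs k x))\<^sup>2 \<partial>lborel) \<le> (\<integral>x. (norm (g x))\<^sup>2 \<partial>lborel) + e"
proof -
  define G where "G = (\<integral>x. (norm (g x))\<^sup>2 \<partial>lborel)"
  define \<eta> where "\<eta> = e / (2 * (G + 1))"
  have G: "G \<ge> 0" unfolding G_def by simp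
  have \<eta>: "\<eta> > 0" "\<eta> * G \<le> e / 2"
    using G \<open>e > 0\<close> unfolding \<eta>_def by (auto simp: field_simps)
  have ig: "integrable lborel (\<lambda>x. (norm (g x))\<^sup>2)" "\<And>k. integrable lborel (\<lambda>x. (norm (gs k x))\<^sup>2)"
    and idiff: "\<And>k. integrable lborel (\<lambda>x. (norm (gs k x - g x))\<^sup>2)"
    using assms(1) memL2_integrable_sq_diff unfolding L2conv_def memL2_def by auto
  have "(\<lambda>k. (1 + 1/\<eta>) * (\<integral>x. (norm (gs k x - g x))\<^sup>2 \<partial>lborel)) \<longlonglongrightarrow> (1 + 1/\<eta>) * 0"
    by (intro tendsto_intros L2conv_integral_sq_diff_tendsto_0[OF assms(1)])
  then have "\<forall>\<^sub>F k in sequentially. (1 + 1/\<eta>) * (\<integral>x. (norm (gs k x - g x))\<^sup>2 \<partial>lborel) < e / 2"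
    by (rule order_tendstoD(2)) (use \<open>e > 0\<close> in simp)
  then show ?thesis unfolding G_def[symmetric]
  proof (rule eventually_mono)
    fix k assume small: "(1 + 1/\<eta>) * (\<integral>x. (norm (gs k x - g x))\<^sup>2 \<partial>lborel) < e / 2"
    have "(\<integral>x. (norm (gs k x))\<^sup>2 \<partial>lborel)
        \<le> (\<integral>x. (1 + \<eta>) * (norm (g x))\<^sup>2 + (1 + 1/\<eta>) * (norm (gs k x - g x))\<^sup>2 \<partial>lborel)"
      using ig idiff norm_power2_le_weighted[OF \<eta>(1)] by (intro integral_mono) auto
    also have "\<dots> = (1 + \<eta>) * G + (1 + 1/\<eta>) * (\<integral>x. (norm (gs k x - g x))\<^sup>2 \<partial>lborel)"
      using ig idiff unfolding G_def by simp
    finally show "(\<integral>x. (norm (gs k x))\<^sup>2 \<partial>lborel) \<le> G + e"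
      using small \<eta>(2) by (simp add: algebra_simps)
  qed
qed

lemma L2conv_weighted_bound_closed:
  fixes w :: "R3 \<Rightarrow> complex"
  assumes fs: "L2conv fs f" and gs: "L2conv gs g"
    and w: "w \<in> borel_measurable lborel" and C: "C > 0"
    and bound: "\<And>k. integrable lborel (\<lambda>x. (norm (fs k x / w x))\<^sup>2) \<and>
      C * (\<integral>x. (norm (fs k x / w x))\<^sup>2 \<partial>lborel) \<le> (\<integral>x. (norm (gs k x))\<^sup>2 \<partial>lborel)"
  shows "integrable lborel (\<lambda>x. (norm (f x / w x))\<^sup>2) \<and>
    C * (\<integral>x. (norm (f x / w x))\<^sup>2 \<partial>lborel) \<le> (\<integral>x. (norm (g x))\<^sup>2 \<partial>lborel)"
proof -
  define G where "G = (\<integral>x. (norm (g x))\<^sup>2 \<partial>lborel)"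
  define H where "H x = (norm (f x / w x))\<^sup>2" for x
  obtain r where r: "strict_mono r" and ae: "AE x in lborel. (\<lambda>n. fs (r n) x) \<longlonglongrightarrow> f x"
    using L2conv_AE_subseq[OF fs] by blast
  have "(\<lambda>n. (norm (fs (r n) x / w x))\<^sup>2) \<longlonglongrightarrow> H x" if "(\<lambda>n. fs (r n) x) \<longlonglongrightarrow> f x" for x
    unfolding H_def divide_inverse by (intro tendsto_intros tendsto_mult_right that)
  with ae have ae_H: "AE x in lborel. (\<lambda>n. (norm (fs (r n) x / w x))\<^sup>2) \<longlonglongrightarrow> H x"
    by (rule eventually_mono)
  have fatou: "(\<integral>\<^sup>+ x. ennreal (H x) \<partial>lborel) \<le> ennreal ((G + e) / C)" if "e > 0" for e
  proof (rule nn_integral_le_of_AE_tendsto[OF _ _ ae_H])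
    show "integrable lborel (\<lambda>x. (norm (fs (r n) x / w x))\<^sup>2)" for n using bound by blast
    have "C * (\<integral>x. (norm (fs k x / w x))\<^sup>2 \<partial>lborel) \<le> G + e"
      if "(\<integral>x. (norm (gs k x))\<^sup>2 \<partial>lborel) \<le> G + e" for k
      using bound[of k] that by linarith
    with L2conv_eventually_integral_sq_le[OF gs \<open>e > 0\<close>]
    have "\<forall>\<^sub>F k in sequentially. C * (\<integral>x. (norm (fs k x / w x))\<^sup>2 \<partial>lborel) \<le> G + e"
      unfolding G_def[symmetric] by (rule eventually_mono)
    then have "\<forall>\<^sub>F n in sequentially. C * (\<integral>x. (norm (fs (r n) x / w x))\<^sup>2 \<partial>lborel) \<le> G + e"
      using filterlim_subseq[OF r] by (rule eventually_compose_filterlim)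
    then show "\<forall>\<^sub>F n in sequentially. (\<integral>x. (norm (fs (r n) x / w x))\<^sup>2 \<partial>lborel) \<le> (G + e) / C"
      by (rule eventually_mono) (use C in \<open>simp add: field_simps\<close>)
  qed simp
  have "f \<in> borel_measurable lborel" using fs unfolding L2conv_def memL2_def by blast
  then have "H \<in> borel_measurable lborel" unfolding H_def using w by measurable
  with fatou C show ?thesis unfolding H_def G_def
    by (intro integrable_bound_of_nn_integral_le) auto
qed

theorem mainTheorem5:
  fixes chi :: "real \<Rightarrow> real" and c :: real
  assumes "continuous_on {0..} chi"
    and "chi C1_differentiable_on {0<..}"
    and "antimono_on {0..} chi"
    and "bounded (chi ` {0..})"
    and "c = Inf (chi ` {0..})"
    and "c > 3/4"
    and "A0_closure_graph chi u g"
  shows "memL2 (\<lambda>x. u x / complex_of_real ((norm x)\<^sup>2)) \<and>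
         (c - 3/4) * L2norm (\<lambda>x. u x / complex_of_real ((norm x)\<^sup>2)) \<le> L2norm g"
proof -
  have lb: "c \<le> chi (norm x)" for x :: R3
    unfolding assms(5) by (rule cInf_lower) (auto intro: bounded_imp_bdd_below[OF assms(4)])
  obtain us where us: "\<And>k. test_fun (us k)" "L2conv us u" "L2conv (\<lambda>k. A0 chi (us k)) g"
    using assms(7) unfolding A0_closure_graph_def by blast
  have "integrable lborel (\<lambda>x. (norm (u x / complex_of_real ((norm x)\<^sup>2)))\<^sup>2) \<and>
      (c - 3/4)\<^sup>2 * (\<integral>x. (norm (u x / complex_of_real ((norm x)\<^sup>2)))\<^sup>2 \<partial>lborel)
        \<le> (\<integral>x. (norm (g x))\<^sup>2 \<partial>lborel)"
  proof (rule L2conv_weighted_bound_closed[OF us(2,3)])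
    show "(\<lambda>x::R3. complex_of_real ((norm x)\<^sup>2)) \<in> borel_measurable lborel"
      by measurable
    show "(c - 3/4)\<^sup>2 > 0" using assms(6) by simp
  qed (rule test_fun_rellich_inequality[OF us(1) assms(1) lb assms(6)])
  moreover have "(\<lambda>x. u x / complex_of_real ((norm x)\<^sup>2)) \<in> borel_measurable lborel"
  proof -
    have "u \<in> borel_measurable lborel" using us(2) unfolding L2conv_def memL2_def by blast
    then show ?thesis by measurable
  qed
  ultimately have "memL2 (\<lambda>x. u x / complex_of_real ((norm x)\<^sup>2))"
    and "sqrt ((c - 3/4)\<^sup>2 * (\<integral>x. (norm (u x / complex_of_real ((norm x)\<^sup>2)))\<^sup>2 \<partial>lborel))
        \<le> sqrt (\<integral>x. (norm (g x))\<^sup>2 \<partial>lborel)"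
    unfolding memL2_def by (blast intro: real_sqrt_le_mono)+
  then show ?thesis
    using assms(6) unfolding L2norm_def by (simp add: real_sqrt_mult)
qed

end
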